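(* Let $k$ be an algebraically closed field of characteristic zero, let $A$ be a cosemisimple Hopf algebra over $k$ with Haar measure $h$ and antipode $S$, and let $V$ be a finite-dimensional irreducible (simple) $A$-comodule. Then: (1) If $V$ is not self-dual (i.e. $V$ is not isomorphic to its dual comodule $V^*$), then $\nu_2(V) = 0$. (2) Suppose $V$ is self-dual, let $\beta : V \otimes V \to k$ be a non-degenerate $A$-colinear bilinear form, and let $E$ be the matrix of $\beta$ in some basis of $V$. Then $$\nu_2(V) = \frac{\dim(V)}{\mathrm{tr}(E\,({}^t\!E)^{-1})}.$$ (3) Suppose $V$ is self-dual and $S^2 = \mathrm{id}$. Then $\nu_2(V) = \pm 1$; moreover $\nu_2(V) = 1$ corresponds to the existence of an $A$-colinear symmetric non-degenerate bilinear form on $V$, and $\nu_2(V) = -1$ corresponds to the existence of an $A$-colinear skew-symmetric non-degenerate bilinear form on $V$.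
   Context: A Hopf algebra $A$ is cosemisimple if every $A$-comodule is a direct sum of simple comodules; such an $A$ has a unique Haar measure, i.e. a linear form $h : A \to k$ with $h(1)=1$ and $(\mathrm{id}\otimes h)\Delta = h(\cdot)1 = (h \otimes \mathrm{id})\Delta$. For a finite-dimensional right $A$-comodule $V$ with basis $e_1,\dots,e_n$ and coaction $e_j \mapsto \sum_i e_i \otimes a_{ij}$, the elements $a_{ij}\in A$ are the matrix coefficients; the character of $V$ is $\chi_V = \sum_i a_{ii}$ (the image of $\mathrm{id}_V$ under the coalgebra map $V^*\otimes V \to A$). The Schur indicator of $V$ is $\nu_2(V) := h(\chi_{V(1)}\chi_{V(2)})$, where $\Delta(\chi_V) = \chi_{V(1)}\otimes\chi_{V(2)}$ in Sweedler notation; equivalently $\nu_2(V) = \sum_{i,j} h(a_{ji}a_{ij})$. A bilinear form $\beta: V\otimes V \to k$ is $A$-colinear if it is a morphism of $A$-comodules, where $V\otimes V$ carries the tensor product coaction and $k$ the trivial coaction $1\mapsto 1\otimes 1$. *)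

theory Defs
  imports Main "HOL-Computational_Algebra.Polynomial"
begin

text \<open>A k-vector space with basis indexed by a type 'i is modelled as the finitely
supported functions 'i => 'k. Linear maps are given by their values on basis vectors.
Tensor products of such spaces are indexed by product types.\<close>

definition supp :: "('i \<Rightarrow> 'k::zero) \<Rightarrow> 'i set" where
  "supp x = {i. x i \<noteq> 0}"

definition fin :: "('i \<Rightarrow> 'k::zero) \<Rightarrow> bool" where
  "fin x \<longleftrightarrow> finite (supp x)"

definition bvec :: "'i \<Rightarrow> 'i \<Rightarrow> 'k::{zero,one}" where
  "bvec i = (\<lambda>j. if j = i then 1 else 0)"

definition lin :: "('i \<Rightarrow> 'j \<Rightarrow> 'k::comm_semiring_1) \<Rightarrow> ('i \<Rightarrow> 'k) \<Rightarrow> 'j \<Rightarrow> 'k" where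
  "lin f x = (\<lambda>t. \<Sum>s\<in>supp x. x s * f s t)"

definition linf :: "('i \<Rightarrow> 'k::comm_semiring_1) \<Rightarrow> ('i \<Rightarrow> 'k) \<Rightarrow> 'k" where
  "linf f x = (\<Sum>s\<in>supp x. x s * f s)"

definition tens :: "('i \<Rightarrow> 'k::times) \<Rightarrow> ('j \<Rightarrow> 'k) \<Rightarrow> ('i \<times> 'j \<Rightarrow> 'k)" where
  "tens x y = (\<lambda>(a, b). x a * y b)"

definition tmap :: "('i \<Rightarrow> 'j \<Rightarrow> 'k::times) \<Rightarrow> ('i2 \<Rightarrow> 'j2 \<Rightarrow> 'k) \<Rightarrow> ('i \<times> 'i2 \<Rightarrow> 'j \<times> 'j2 \<Rightarrow> 'k)" where
  "tmap f g = (\<lambda>(a, b). tens (f a) (g b))"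

definition rassoc :: "('a \<times> 'b) \<times> 'c \<Rightarrow> 'a \<times> ('b \<times> 'c) \<Rightarrow> 'k::{zero,one}" where
  "rassoc = (\<lambda>((a, b), c). bvec (a, (b, c)))"

text \<open>A Hopf algebra A over k with a fixed basis indexed by 'i, given by the values of
multiplication, unit, comultiplication, counit and antipode on basis vectors.\<close>

record ('i, 'k) hopf =
  hmul    :: "'i \<Rightarrow> 'i \<Rightarrow> 'i \<Rightarrow> 'k"
  hunit   :: "'i \<Rightarrow> 'k"
  hcomul  :: "'i \<Rightarrow> 'i \<times> 'i \<Rightarrow> 'k"
  hcounit :: "'i \<Rightarrow> 'k"
  hanti   :: "'i \<Rightarrow> 'i \<Rightarrow> 'k"

context
  fixes H :: "('i, 'k::field) hopf"
begin

definition Mul :: "('i \<Rightarrow> 'k) \<Rightarrow> ('i \<Rightarrow> 'k) \<Rightarrow> 'i \<Rightarrow> 'k" where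
  "Mul x y = lin (\<lambda>(a, b). hmul H a b) (tens x y)"

definition Comul :: "('i \<Rightarrow> 'k) \<Rightarrow> 'i \<times> 'i \<Rightarrow> 'k" where
  "Comul x = lin (hcomul H) x"

definition Counit :: "('i \<Rightarrow> 'k) \<Rightarrow> 'k" where
  "Counit x = linf (hcounit H) x"

definition Anti :: "('i \<Rightarrow> 'k) \<Rightarrow> 'i \<Rightarrow> 'k" where
  "Anti x = lin (hanti H) x"

definition Mul2 :: "('i \<times> 'i \<Rightarrow> 'k) \<Rightarrow> ('i \<times> 'i \<Rightarrow> 'k) \<Rightarrow> 'i \<times> 'i \<Rightarrow> 'k" where
  "Mul2 u v = lin (\<lambda>((a, b), (c, d)). tens (hmul H a c) (hmul H b d)) (tens u v)"

definition hopf_alg :: bool where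
  "hopf_alg \<longleftrightarrow>
    (\<forall>a b. fin (hmul H a b)) \<and> fin (hunit H) \<and> (\<forall>a. fin (hcomul H a)) \<and> (\<forall>a. fin (hanti H a)) \<and>
    \<comment> \<open>associative unital algebra\<close>
    (\<forall>x y z. fin x \<and> fin y \<and> fin z \<longrightarrow> Mul (Mul x y) z = Mul x (Mul y z)) \<and>
    (\<forall>x. fin x \<longrightarrow> Mul (hunit H) x = x \<and> Mul x (hunit H) = x) \<and>
    \<comment> \<open>coassociative counital coalgebra\<close>
    (\<forall>x. fin x \<longrightarrow> lin rassoc (lin (tmap (hcomul H) bvec) (Comul x)) = lin (tmap bvec (hcomul H)) (Comul x)) \<and>
    (\<forall>x. fin x \<longrightarrow> lin (\<lambda>(a, b). (\<lambda>t. hcounit H a * bvec b t)) (Comul x) = x \<and>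
                   lin (\<lambda>(a, b). (\<lambda>t. bvec a t * hcounit H b)) (Comul x) = x) \<and>
    \<comment> \<open>comultiplication and counit are algebra maps\<close>
    (\<forall>x y. fin x \<and> fin y \<longrightarrow> Comul (Mul x y) = Mul2 (Comul x) (Comul y)) \<and>
    Comul (hunit H) = tens (hunit H) (hunit H) \<and>
    (\<forall>x y. fin x \<and> fin y \<longrightarrow> Counit (Mul x y) = Counit x * Counit y) \<and>
    Counit (hunit H) = 1 \<and>
    \<comment> \<open>antipode\<close>
    (\<forall>x. fin x \<longrightarrow>
       lin (\<lambda>(a, b). Mul (hanti H a) (bvec b)) (Comul x) = (\<lambda>t. Counit x * hunit H t) \<and>
       lin (\<lambda>(a, b). Mul (bvec a) (hanti H b)) (Comul x) = (\<lambda>t. Counit x * hunit H t))"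

definition haar :: "('i \<Rightarrow> 'k) \<Rightarrow> bool" where
  "haar h \<longleftrightarrow> linf h (hunit H) = 1 \<and>
    (\<forall>x. fin x \<longrightarrow>
       lin (\<lambda>(a, b). (\<lambda>t. bvec a t * h b)) (Comul x) = (\<lambda>t. linf h x * hunit H t) \<and>
       lin (\<lambda>(a, b). (\<lambda>t. h a * bvec b t)) (Comul x) = (\<lambda>t. linf h x * hunit H t))"

text \<open>A right A-comodule V of dimension n with basis e_0..e_(n-1) and coaction
e_j |-> sum_i e_i (x) u i j.  Vectors of V are functions nat => k vanishing from n on.\<close>

definition comod :: "nat \<Rightarrow> (nat \<Rightarrow> nat \<Rightarrow> 'i \<Rightarrow> 'k) \<Rightarrow> bool" where
  "comod n u \<longleftrightarrow>
    (\<forall>i<n. \<forall>j<n. fin (u i j)) \<and>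
    (\<forall>i<n. \<forall>j<n. Comul (u i j) = (\<lambda>p. \<Sum>l<n. tens (u i l) (u l j) p)) \<and>
    (\<forall>i<n. \<forall>j<n. Counit (u i j) = (if i = j then 1 else 0))"

definition vspace :: "nat \<Rightarrow> (nat \<Rightarrow> 'k) set" where
  "vspace n = {v. \<forall>i\<ge>n. v i = 0}"

text \<open>W is a subcomodule: a subspace with rho(W) contained in W (x) A.  The coefficient
of rho(v) at e_i (x) b_t is  sum_j v_j * u i j t.\<close>
definition subcomod :: "nat \<Rightarrow> (nat \<Rightarrow> nat \<Rightarrow> 'i \<Rightarrow> 'k) \<Rightarrow> (nat \<Rightarrow> 'k) set \<Rightarrow> bool" where
  "subcomod n u W \<longleftrightarrow>
    W \<subseteq> vspace n \<and> (\<lambda>_. 0) \<in> W \<and>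
    (\<forall>v\<in>W. \<forall>w\<in>W. (\<lambda>i. v i + w i) \<in> W) \<and>
    (\<forall>c. \<forall>v\<in>W. (\<lambda>i. c * v i) \<in> W) \<and>
    (\<forall>v\<in>W. \<forall>t. (\<lambda>i. if i < n then (\<Sum>j<n. v j * u i j t) else 0) \<in> W)"

definition simple_comod :: "nat \<Rightarrow> (nat \<Rightarrow> nat \<Rightarrow> 'i \<Rightarrow> 'k) \<Rightarrow> bool" where
  "simple_comod n u \<longleftrightarrow> comod n u \<and> n > 0 \<and>
    (\<forall>W. subcomod n u W \<longrightarrow> W = {\<lambda>_. 0} \<or> W = vspace n)"

definition simple_sub :: "nat \<Rightarrow> (nat \<Rightarrow> nat \<Rightarrow> 'i \<Rightarrow> 'k) \<Rightarrow> (nat \<Rightarrow> 'k) set \<Rightarrow> bool" where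
  "simple_sub n u W \<longleftrightarrow> subcomod n u W \<and> W \<noteq> {\<lambda>_. 0} \<and>
    (\<forall>W'. subcomod n u W' \<and> W' \<subseteq> W \<longrightarrow> W' = {\<lambda>_. 0} \<or> W' = W)"

definition cosemisimple :: bool where
  "cosemisimple \<longleftrightarrow>
    (\<forall>n (u :: nat \<Rightarrow> nat \<Rightarrow> 'i \<Rightarrow> 'k). comod n u \<longrightarrow>
      (\<exists>m (Ws :: nat \<Rightarrow> (nat \<Rightarrow> 'k) set). (\<forall>l<m. simple_sub n u (Ws l)) \<and>
        (\<forall>v\<in>vspace n. \<exists>!w. (\<forall>l<m. w l \<in> Ws l) \<and> (\<forall>l\<ge>m. w l = (\<lambda>_. 0)) \<and>
                              v = (\<lambda>i. \<Sum>l<m. w l i))))"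

text \<open>Dual comodule V^* in the dual basis: e_j^* |-> sum_i e_i^* (x) S(u j i).\<close>
definition dual_comod :: "nat \<Rightarrow> (nat \<Rightarrow> nat \<Rightarrow> 'i \<Rightarrow> 'k) \<Rightarrow> nat \<Rightarrow> nat \<Rightarrow> 'i \<Rightarrow> 'k" where
  "dual_comod n u = (\<lambda>i j. Anti (u j i))"

definition mat_inverse_of :: "nat \<Rightarrow> (nat \<Rightarrow> nat \<Rightarrow> 'k) \<Rightarrow> (nat \<Rightarrow> nat \<Rightarrow> 'k) \<Rightarrow> bool" where
  "mat_inverse_of n P Q \<longleftrightarrow>
    (\<forall>i<n. \<forall>j<n. (\<Sum>l<n. P i l * Q l j) = (if i = j then 1 else 0) \<and>
                 (\<Sum>l<n. Q i l * P l j) = (if i = j then 1 else 0))"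

definition invertible :: "nat \<Rightarrow> (nat \<Rightarrow> nat \<Rightarrow> 'k) \<Rightarrow> bool" where
  "invertible n P \<longleftrightarrow> (\<exists>Q. mat_inverse_of n P Q)"

text \<open>Comodule isomorphism between n-dimensional comodules u and w: an invertible
matrix P (the linear map e_j |-> sum_i P i j e'_i) with (P (x) id) rho = rho' P.\<close>
definition iso_comod :: "nat \<Rightarrow> (nat \<Rightarrow> nat \<Rightarrow> 'i \<Rightarrow> 'k) \<Rightarrow> nat \<Rightarrow> (nat \<Rightarrow> nat \<Rightarrow> 'i \<Rightarrow> 'k) \<Rightarrow> bool" where
  "iso_comod n u m w \<longleftrightarrow> n = m \<and>
    (\<exists>P. invertible n P \<and>
      (\<forall>i<n. \<forall>j<n. (\<lambda>t. \<Sum>l<n. P i l * u l j t) = (\<lambda>t. \<Sum>l<n. w i l t * P l j)))"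

definition self_dual :: "nat \<Rightarrow> (nat \<Rightarrow> nat \<Rightarrow> 'i \<Rightarrow> 'k) \<Rightarrow> bool" where
  "self_dual n u \<longleftrightarrow> iso_comod n u n (dual_comod n u)"

text \<open>The bilinear form beta on V with matrix E (beta(e_p,e_q) = E p q) is A-colinear
V (x) V -> k: (beta (x) id) rho_{V(x)V} = beta(-) 1.\<close>
definition colinear_form :: "nat \<Rightarrow> (nat \<Rightarrow> nat \<Rightarrow> 'i \<Rightarrow> 'k) \<Rightarrow> (nat \<Rightarrow> nat \<Rightarrow> 'k) \<Rightarrow> bool" where
  "colinear_form n u E \<longleftrightarrow>
    (\<forall>i<n. \<forall>j<n. (\<lambda>t. \<Sum>p<n. \<Sum>q<n. E p q * Mul (u p i) (u q j) t) = (\<lambda>t. E i j * hunit H t))"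

definition nu2 :: "('i \<Rightarrow> 'k) \<Rightarrow> nat \<Rightarrow> (nat \<Rightarrow> nat \<Rightarrow> 'i \<Rightarrow> 'k) \<Rightarrow> 'k" where
  "nu2 h n u = (\<Sum>i<n. \<Sum>j<n. linf h (Mul (u j i) (u i j)))"

end

definition mat_trace :: "nat \<Rightarrow> (nat \<Rightarrow> nat \<Rightarrow> 'k::comm_semiring_1) \<Rightarrow> 'k" where
  "mat_trace n P = (\<Sum>i<n. P i i)"

definition mat_mult :: "nat \<Rightarrow> (nat \<Rightarrow> nat \<Rightarrow> 'k::comm_semiring_1) \<Rightarrow> (nat \<Rightarrow> nat \<Rightarrow> 'k) \<Rightarrow> nat \<Rightarrow> nat \<Rightarrow> 'k" where
  "mat_mult n P Q = (\<lambda>i j. \<Sum>l<n. P i l * Q l j)"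

definition mat_transpose :: "(nat \<Rightarrow> nat \<Rightarrow> 'k) \<Rightarrow> nat \<Rightarrow> nat \<Rightarrow> 'k" where
  "mat_transpose P = (\<lambda>i j. P j i)"

end

theory Submission
  imports Defs "Jordan_Normal_Form.Char_Poly"
begin

text \<open>
  For fixed a and b the coefficients h(u_ai u_bj) form an A-colinear bilinear form on V, by
  invariance of the Haar measure h, and A-colinear forms on V with matrix E are the same as
  comodule maps V -> V* with matrix E^T. By Schur's lemma such a map is zero or invertible; so if
  V is not self-dual all these coefficients vanish and nu_2(V) = 0.

  If E is a non-degenerate colinear form, every colinear form is a multiple of E, because k is
  algebraically closed and so every comodule endomorphism of V is scalar. Hence
  h(u_ai u_bj) = C_ab E_ij for a scalar matrix C. Invariance of h on the other side makes CE a
  comodule endomorphism of V, so C = l E^-1; applying h to the colinearity of E gives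
  l tr(E (E^T)^-1) = 1, while nu_2(V) = sum C_ji E_ij = l n. When S^2 = id the transpose E^T is
  colinear as well, so E^T = s E with s = 1 or s = -1, and then tr(E (E^T)^-1) = s n.
\<close>

lemma sum_mult_sum_assoc:
  "(\<Sum>l\<in>A. a l * (\<Sum>k\<in>B. b l k * c k)) = (\<Sum>k\<in>B. (\<Sum>l\<in>A. a l * b l k) * (c k :: 'k::comm_semiring_1))"
  by (simp add: sum_distrib_left sum_distrib_right mult.assoc) (rule sum.swap)

lemma sum_swap3:
  "(\<Sum>a\<in>A. \<Sum>b\<in>B. \<Sum>c\<in>C. f a b c) = (\<Sum>b\<in>B. \<Sum>c\<in>C. \<Sum>a\<in>A. (f a b c :: 'k::comm_monoid_add))"
  by (subst sum.swap) (rule sum.cong[OF refl sum.swap])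

lemma sum_swap4:
  "(\<Sum>a\<in>A. \<Sum>b\<in>B. \<Sum>c\<in>C. \<Sum>d\<in>D. f a b c d)
    = (\<Sum>c\<in>C. \<Sum>d\<in>D. \<Sum>a\<in>A. \<Sum>b\<in>B. (f a b c d :: 'k::comm_monoid_add))"
proof -
  have "(\<Sum>a\<in>A. \<Sum>b\<in>B. \<Sum>c\<in>C. \<Sum>d\<in>D. f a b c d) = (\<Sum>a\<in>A. \<Sum>c\<in>C. \<Sum>d\<in>D. \<Sum>b\<in>B. f a b c d)"
    by (intro sum.cong refl sum_swap3)
  also have "\<dots> = (\<Sum>c\<in>C. \<Sum>d\<in>D. \<Sum>a\<in>A. \<Sum>b\<in>B. f a b c d)"
    by (rule sum_swap3)
  finally show ?thesis .
qed

lemma sum_delta_left [simp]: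
  "i < (n::nat) \<Longrightarrow> (\<Sum>j<n. (if i = j then 1 else 0) * f j) = (f i :: 'k::semiring_1)"
  by (simp add: if_distrib if_distribR cong: if_cong)

lemma sum_delta_right [simp]:
  "j < (n::nat) \<Longrightarrow> (\<Sum>i<n. f i * (if i = j then 1 else 0)) = (f j :: 'k::semiring_1)"
  by (simp add: if_distrib cong: if_cong)

lemma supp_sum_subset: "supp (\<lambda>t. \<Sum>k\<in>K. X k t) \<subseteq> (\<Union>k\<in>K. supp (X k))"
proof
  fix t assume "t \<in> supp (\<lambda>t. \<Sum>k\<in>K. X k t)"
  then have "(\<Sum>k\<in>K. X k t) \<noteq> 0" by (simp add: supp_def)
  then obtain k where "k \<in> K" "X k t \<noteq> 0" by (meson sum.neutral)
  then show "t \<in> (\<Union>k\<in>K. supp (X k))" by (auto simp: supp_def)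
qed

lemma fin_sum: "finite K \<Longrightarrow> (\<And>k. k \<in> K \<Longrightarrow> fin (X k)) \<Longrightarrow> fin (\<lambda>t. \<Sum>k\<in>K. X k t)"
  unfolding fin_def by (rule finite_subset[OF supp_sum_subset]) auto

lemma fin_sum_lessThan [simp]:
  "(\<And>k. k < (m::nat) \<Longrightarrow> fin (X k)) \<Longrightarrow> fin (\<lambda>t. \<Sum>k<m. X k t)"
  by (rule fin_sum) auto

lemma fin_scale [simp]: "fin x \<Longrightarrow> fin (\<lambda>t. (c::'k::field) * x t)"
  unfolding fin_def supp_def by (rule finite_subset[of _ "{i. x i \<noteq> 0}"]) auto

lemma fin_bvec [simp]: "fin (bvec i)"
  unfolding fin_def supp_def bvec_def by simp

lemma lin_eq_sum_over:
  assumes "finite S" "supp x \<subseteq> S"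
  shows "lin f x t = (\<Sum>s\<in>S. x s * f s t)"
  unfolding lin_def using assms by (intro sum.mono_neutral_left) (auto simp: supp_def)

lemma lin_sum:
  fixes X :: "'a \<Rightarrow> 'i \<Rightarrow> 'k::comm_semiring_1"
  assumes K: "finite K" and X: "\<And>k. k \<in> K \<Longrightarrow> fin (X k)"
  shows "lin f (\<lambda>t. \<Sum>k\<in>K. X k t) = (\<lambda>s. \<Sum>k\<in>K. lin f (X k) s)"
proof
  fix s
  define S where "S = (\<Union>k\<in>K. supp (X k))"
  have S: "finite S" using K X unfolding S_def fin_def by auto
  have "lin f (\<lambda>t. \<Sum>k\<in>K. X k t) s = (\<Sum>a\<in>S. (\<Sum>k\<in>K. X k a) * f a s)"
    unfolding S_def by (rule lin_eq_sum_over[OF S[unfolded S_def] supp_sum_subset])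
  also have "\<dots> = (\<Sum>k\<in>K. \<Sum>a\<in>S. X k a * f a s)"
    by (simp add: sum_distrib_right sum.swap[of _ S])
  also have "\<dots> = (\<Sum>k\<in>K. lin f (X k) s)"
    using S by (intro sum.cong refl lin_eq_sum_over[symmetric]) (auto simp: S_def)
  finally show "lin f (\<lambda>t. \<Sum>k\<in>K. X k t) s = (\<Sum>k\<in>K. lin f (X k) s)" .
qed

lemma lin_sum_lessThan:
  fixes X :: "nat \<Rightarrow> 'i \<Rightarrow> 'k::comm_semiring_1"
  shows "(\<And>k. k < m \<Longrightarrow> fin (X k)) \<Longrightarrow> lin f (\<lambda>t. \<Sum>k<m. X k t) = (\<lambda>s. \<Sum>k<m. lin f (X k) s)"
  by (rule lin_sum) auto

lemma linf_conv_lin: "linf f x = lin (\<lambda>s _. f s) x ()"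
  by (simp add: linf_def lin_def)

lemma linf_sum_lessThan:
  fixes X :: "nat \<Rightarrow> 'i \<Rightarrow> 'k::comm_semiring_1"
  shows "(\<And>k. k < m \<Longrightarrow> fin (X k)) \<Longrightarrow> linf f (\<lambda>t. \<Sum>k<m. X k t) = (\<Sum>k<m. linf f (X k))"
  unfolding linf_conv_lin by (simp add: lin_sum_lessThan)

lemma lin_scale:
  fixes x :: "'i \<Rightarrow> 'k::field"
  assumes "fin x"
  shows "lin f (\<lambda>t. c * x t) = (\<lambda>s. c * lin f x s)"
proof
  fix s
  have "lin f (\<lambda>t. c * x t) s = (\<Sum>a\<in>supp x. c * x a * f a s)"
    using assms by (intro lin_eq_sum_over) (auto simp: supp_def fin_def)
  also have "\<dots> = c * lin f x s" by (simp add: lin_def sum_distrib_left mult.assoc)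
  finally show "lin f (\<lambda>t. c * x t) s = c * lin f x s" .
qed

lemma linf_scale: "fin x \<Longrightarrow> linf f (\<lambda>t. (c::'k::field) * x t) = c * linf f x"
  unfolding linf_conv_lin by (simp add: lin_scale)

lemma fin_lin:
  fixes x :: "'i \<Rightarrow> 'k::field"
  assumes "fin x" "\<And>s. s \<in> supp x \<Longrightarrow> fin (f s)"
  shows "fin (lin f x)"
proof -
  have "fin (\<lambda>t. \<Sum>s\<in>supp x. x s * f s t)"
    using assms by (intro fin_sum fin_scale) (auto simp: fin_def)
  then show ?thesis by (simp add: lin_def)
qed

lemma supp_tens_subset: "supp (tens x (y :: 'j \<Rightarrow> 'k::comm_semiring_1)) \<subseteq> supp x \<times> supp y"
  by (auto simp: supp_def tens_def)

lemma fin_tens [simp]: "fin x \<Longrightarrow> fin y \<Longrightarrow> fin (tens x (y :: 'j \<Rightarrow> 'k::field))"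
  unfolding fin_def by (rule finite_subset[OF supp_tens_subset]) auto

lemma tens_sum_left:
  "tens (\<lambda>t. \<Sum>k\<in>K. X k t) y = (\<lambda>p. \<Sum>k\<in>K. tens (X k) (y :: 'j \<Rightarrow> 'k::comm_semiring_1) p)"
  by (auto simp: tens_def fun_eq_iff sum_distrib_right)

lemma tens_sum_right:
  "tens x (\<lambda>t. \<Sum>k\<in>K. Y k t) = (\<lambda>p. \<Sum>k\<in>K. tens x (Y k :: 'j \<Rightarrow> 'k::comm_semiring_1) p)"
  by (auto simp: tens_def fun_eq_iff sum_distrib_left)

lemma tens_scale_left: "tens (\<lambda>t. c * x t) y = (\<lambda>p. c * tens x (y :: 'j \<Rightarrow> 'k::comm_semiring_1) p)"
  by (auto simp: tens_def fun_eq_iff mult_ac)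

lemma tens_scale_right: "tens x (\<lambda>t. c * y t) = (\<lambda>p. c * tens x (y :: 'j \<Rightarrow> 'k::comm_semiring_1) p)"
  by (auto simp: tens_def fun_eq_iff mult_ac)

lemma lin_tens:
  fixes x :: "'a \<Rightarrow> 'k::field"
  assumes "fin x" "fin y"
  shows "lin G (tens x y) t = (\<Sum>a\<in>supp x. \<Sum>b\<in>supp y. x a * y b * G (a, b) t)"
proof -
  have "lin G (tens x y) t = (\<Sum>p\<in>supp x \<times> supp y. tens x y p * G p t)"
    using assms supp_tens_subset by (intro lin_eq_sum_over) (auto simp: fin_def)
  also have "\<dots> = (\<Sum>a\<in>supp x. \<Sum>b\<in>supp y. x a * y b * G (a, b) t)"
    by (simp add: sum.cartesian_product tens_def split_def)
  finally show ?thesis .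
qed

lemma sum_supp_bvec: "fin (x :: 'i \<Rightarrow> 'k::field) \<Longrightarrow> (\<Sum>b\<in>supp x. x b * bvec b s) = x s"
  by (simp add: bvec_def fin_def supp_def if_distrib if_distribR sum.delta' cong: if_cong)

lemma lin_tens_bvec_left:
  fixes P :: "'i \<Rightarrow> 'k::field"
  assumes "fin P" "fin Q"
  shows "lin (\<lambda>(a, b). (\<lambda>t. h a * bvec b t)) (tens P Q) = (\<lambda>t. linf h P * Q t)"
proof
  fix t
  have "lin (\<lambda>(a, b). (\<lambda>t. h a * bvec b t)) (tens P Q) t
      = (\<Sum>a\<in>supp P. P a * h a) * (\<Sum>b\<in>supp Q. Q b * bvec b t)"
    using assms unfolding sum_distrib_right by (simp add: lin_tens sum_distrib_left mult_ac)
  then show "lin (\<lambda>(a, b). (\<lambda>t. h a * bvec b t)) (tens P Q) t = linf h P * Q t"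
    using assms by (simp add: sum_supp_bvec linf_def)
qed

lemma lin_tens_bvec_right:
  fixes P :: "'i \<Rightarrow> 'k::field"
  assumes "fin P" "fin Q"
  shows "lin (\<lambda>(a, b). (\<lambda>t. bvec a t * h b)) (tens P Q) = (\<lambda>t. P t * linf h Q)"
proof
  fix t
  have "lin (\<lambda>(a, b). (\<lambda>t. bvec a t * h b)) (tens P Q) t
      = (\<Sum>a\<in>supp P. P a * bvec a t) * (\<Sum>b\<in>supp Q. Q b * h b)"
    using assms by (simp add: lin_tens sum_distrib_left sum_distrib_right mult_ac)
  then show "lin (\<lambda>(a, b). (\<lambda>t. bvec a t * h b)) (tens P Q) t = P t * linf h Q"
    using assms by (simp add: sum_supp_bvec linf_def)
qed

locale hopf_algebra =
  fixes H :: "('i, 'k::field) hopf"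
  assumes hopf_alg: "hopf_alg H"
begin

lemma fin_hmul: "fin (hmul H a b)"
  using hopf_alg by (simp add: hopf_alg_def)

lemma fin_hunit [simp]: "fin (hunit H)"
  using hopf_alg by (simp add: hopf_alg_def)

lemma fin_hanti: "fin (hanti H a)"
  using hopf_alg by (simp add: hopf_alg_def)

lemma Mul_assoc: "fin x \<Longrightarrow> fin y \<Longrightarrow> fin z \<Longrightarrow> Mul H (Mul H x y) z = Mul H x (Mul H y z)"
  using hopf_alg by (simp add: hopf_alg_def)

lemma Mul_unit_left [simp]: "fin x \<Longrightarrow> Mul H (hunit H) x = x"
  using hopf_alg by (simp add: hopf_alg_def)

lemma Mul_unit_right [simp]: "fin x \<Longrightarrow> Mul H x (hunit H) = x"
  using hopf_alg by (simp add: hopf_alg_def)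

lemma Comul_Mul: "fin x \<Longrightarrow> fin y \<Longrightarrow> Comul H (Mul H x y) = Mul2 H (Comul H x) (Comul H y)"
  using hopf_alg by (simp add: hopf_alg_def)

lemma antipode_left:
  "fin x \<Longrightarrow> lin (\<lambda>(a, b). Mul H (hanti H a) (bvec b)) (Comul H x) = (\<lambda>t. Counit H x * hunit H t)"
  using hopf_alg by (simp add: hopf_alg_def)

lemma antipode_right:
  "fin x \<Longrightarrow> lin (\<lambda>(a, b). Mul H (bvec a) (hanti H b)) (Comul H x) = (\<lambda>t. Counit H x * hunit H t)"
  using hopf_alg by (simp add: hopf_alg_def)

lemma fin_Mul [simp]: "fin x \<Longrightarrow> fin y \<Longrightarrow> fin (Mul H x y)"
  unfolding Mul_def by (intro fin_lin fin_tens) (auto simp: fin_hmul)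

lemma fin_Anti [simp]: "fin x \<Longrightarrow> fin (Anti H x)"
  unfolding Anti_def by (intro fin_lin) (auto simp: fin_hanti)

lemma Mul_sum_left:
  "finite K \<Longrightarrow> (\<And>k. k \<in> K \<Longrightarrow> fin (X k)) \<Longrightarrow> fin y \<Longrightarrow>
   Mul H (\<lambda>t. \<Sum>k\<in>K. X k t) y = (\<lambda>s. \<Sum>k\<in>K. Mul H (X k) y s)"
  unfolding Mul_def tens_sum_left by (intro lin_sum fin_tens) auto

lemma Mul_sum_right:
  "finite K \<Longrightarrow> (\<And>k. k \<in> K \<Longrightarrow> fin (Y k)) \<Longrightarrow> fin x \<Longrightarrow>
   Mul H x (\<lambda>t. \<Sum>k\<in>K. Y k t) = (\<lambda>s. \<Sum>k\<in>K. Mul H x (Y k) s)"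
  unfolding Mul_def tens_sum_right by (intro lin_sum fin_tens) auto

lemma Mul_scale_left: "fin x \<Longrightarrow> fin y \<Longrightarrow> Mul H (\<lambda>t. c * x t) y = (\<lambda>s. c * Mul H x y s)"
  unfolding Mul_def tens_scale_left by (intro lin_scale fin_tens)

lemma Mul_scale_right: "fin x \<Longrightarrow> fin y \<Longrightarrow> Mul H x (\<lambda>t. c * y t) = (\<lambda>s. c * Mul H x y s)"
  unfolding Mul_def tens_scale_right by (intro lin_scale fin_tens)

lemma Anti_sum:
  "(\<And>k. k < (m::nat) \<Longrightarrow> fin (X k)) \<Longrightarrow>
   Anti H (\<lambda>t. \<Sum>k<m. X k t) = (\<lambda>s. \<Sum>k<m. Anti H (X k) s)"
  unfolding Anti_def by (rule lin_sum) auto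

lemma Anti_scale: "fin x \<Longrightarrow> Anti H (\<lambda>t. c * x t) = (\<lambda>s. c * Anti H x s)"
  unfolding Anti_def by (rule lin_scale)

lemma Mul_sum_lessThan_left:
  "(\<And>k. k < (m::nat) \<Longrightarrow> fin (X k)) \<Longrightarrow> fin y \<Longrightarrow>
   Mul H (\<lambda>t. \<Sum>k<m. X k t) y = (\<lambda>s. \<Sum>k<m. Mul H (X k) y s)"
  by (rule Mul_sum_left) auto

lemma Mul_sum_lessThan_right:
  "(\<And>k. k < (m::nat) \<Longrightarrow> fin (Y k)) \<Longrightarrow> fin x \<Longrightarrow>
   Mul H x (\<lambda>t. \<Sum>k<m. Y k t) = (\<lambda>s. \<Sum>k<m. Mul H x (Y k) s)"
  by (rule Mul_sum_right) auto

lemmas Mul_linear = Mul_sum_lessThan_left Mul_sum_lessThan_right Mul_scale_left Mul_scale_right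

lemma Mul_scaled_unit_left [simp]: "fin y \<Longrightarrow> Mul H (\<lambda>s. c * hunit H s) y = (\<lambda>s. c * y s)"
  by (simp add: Mul_scale_left)

lemma Mul_scaled_unit_right [simp]: "fin x \<Longrightarrow> Mul H x (\<lambda>s. c * hunit H s) = (\<lambda>s. c * x s)"
  by (simp add: Mul_scale_right)

lemma Mul_expand:
  "fin x \<Longrightarrow> fin y \<Longrightarrow> Mul H x y t = (\<Sum>a\<in>supp x. \<Sum>b\<in>supp y. x a * y b * hmul H a b t)"
  unfolding Mul_def by (subst lin_tens) auto

lemma lin_antipode_left_tens:
  assumes P: "fin P" and Q: "fin Q"
  shows "lin (\<lambda>(a, b). Mul H (hanti H a) (bvec b)) (tens P Q) = Mul H (Anti H P) Q"
proof
  fix t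
  have "Mul H (Anti H P) Q t
      = Mul H (\<lambda>s. \<Sum>a\<in>supp P. P a * hanti H a s) (\<lambda>s. \<Sum>b\<in>supp Q. Q b * bvec b s) t"
    using Q by (simp add: Anti_def lin_def sum_supp_bvec)
  also have "\<dots> = (\<Sum>a\<in>supp P. \<Sum>b\<in>supp Q. P a * (Q b * Mul H (hanti H a) (bvec b) t))"
    using P Q fin_def[of P] fin_def[of Q]
    by (simp add: Mul_sum_left Mul_sum_right Mul_scale_left Mul_scale_right fin_sum fin_hanti)
  also have "\<dots> = lin (\<lambda>(a, b). Mul H (hanti H a) (bvec b)) (tens P Q) t"
    using P Q by (simp add: lin_tens mult.assoc)
  finally show "lin (\<lambda>(a, b). Mul H (hanti H a) (bvec b)) (tens P Q) t = Mul H (Anti H P) Q t"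
    by simp
qed

lemma lin_antipode_right_tens:
  assumes P: "fin P" and Q: "fin Q"
  shows "lin (\<lambda>(a, b). Mul H (bvec a) (hanti H b)) (tens P Q) = Mul H P (Anti H Q)"
proof
  fix t
  have "Mul H P (Anti H Q) t
      = Mul H (\<lambda>s. \<Sum>a\<in>supp P. P a * bvec a s) (\<lambda>s. \<Sum>b\<in>supp Q. Q b * hanti H b s) t"
    using P by (simp add: Anti_def lin_def sum_supp_bvec)
  also have "\<dots> = (\<Sum>a\<in>supp P. \<Sum>b\<in>supp Q. P a * (Q b * Mul H (bvec a) (hanti H b) t))"
    using P Q fin_def[of P] fin_def[of Q]
    by (simp add: Mul_sum_left Mul_sum_right Mul_scale_left Mul_scale_right fin_sum fin_hanti)
  also have "\<dots> = lin (\<lambda>(a, b). Mul H (bvec a) (hanti H b)) (tens P Q) t"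
    using P Q by (simp add: lin_tens mult.assoc)
  finally show "lin (\<lambda>(a, b). Mul H (bvec a) (hanti H b)) (tens P Q) t = Mul H P (Anti H Q) t"
    by simp
qed

lemma Mul2_tens:
  assumes a: "fin a" and b: "fin b" and c: "fin c" and d: "fin d"
  shows "Mul2 H (tens a b) (tens c d) = tens (Mul H a c) (Mul H b d)"
proof
  fix p :: "'i \<times> 'i"
  obtain t1 t2 where p: "p = (t1, t2)" by (cases p)
  let ?S = "(supp a \<times> supp b) \<times> (supp c \<times> supp d)"
  have S: "finite ?S" using a b c d by (simp add: fin_def)
  have sub: "supp (tens (tens a b) (tens c d)) \<subseteq> ?S"
    using supp_tens_subset[of "tens a b" "tens c d"] supp_tens_subset[of a b]
      supp_tens_subset[of c d] by blast
  have "Mul2 H (tens a b) (tens c d) p =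
     (\<Sum>x\<in>supp a. \<Sum>y\<in>supp b. \<Sum>z\<in>supp c. \<Sum>w\<in>supp d.
        a x * c z * hmul H x z t1 * (b y * d w * hmul H y w t2))"
    unfolding Mul2_def
    by (subst lin_eq_sum_over[OF S sub]) (simp add: p tens_def sum.cartesian_product' mult_ac)
  also have "\<dots> = Mul H a c t1 * Mul H b d t2"
    using a b c d by (simp add: Mul_expand sum_product)
  finally show "Mul2 H (tens a b) (tens c d) p = tens (Mul H a c) (Mul H b d) p"
    by (simp add: p tens_def)
qed

lemma Mul2_sum_left:
  "(\<And>k. k < (m::nat) \<Longrightarrow> fin (X k)) \<Longrightarrow> fin y \<Longrightarrow>
   Mul2 H (\<lambda>t. \<Sum>k<m. X k t) y = (\<lambda>s. \<Sum>k<m. Mul2 H (X k) y s)"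
  unfolding Mul2_def tens_sum_left by (intro lin_sum fin_tens) auto

lemma Mul2_sum_right:
  "(\<And>k. k < (m::nat) \<Longrightarrow> fin (Y k)) \<Longrightarrow> fin x \<Longrightarrow>
   Mul2 H x (\<lambda>t. \<Sum>k<m. Y k t) = (\<lambda>s. \<Sum>k<m. Mul2 H x (Y k) s)"
  unfolding Mul2_def tens_sum_right by (intro lin_sum fin_tens) auto

end

section \<open>Comodule maps and Schur's lemma\<close>

definition comod_hom ::
  "nat \<Rightarrow> (nat \<Rightarrow> nat \<Rightarrow> 'i \<Rightarrow> 'k::comm_semiring_1) \<Rightarrow> (nat \<Rightarrow> nat \<Rightarrow> 'i \<Rightarrow> 'k) \<Rightarrow> (nat \<Rightarrow> nat \<Rightarrow> 'k) \<Rightarrow> bool"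
  where "comod_hom n u w P \<longleftrightarrow>
    (\<forall>i<n. \<forall>j<n. \<forall>t. (\<Sum>l<n. P i l * u l j t) = (\<Sum>l<n. w i l t * P l j))"

lemma iso_comod_iff_invertible_comod_hom:
  "iso_comod n u n w \<longleftrightarrow> (\<exists>P. invertible n P \<and> comod_hom n u w P)"
  by (auto simp: iso_comod_def comod_hom_def fun_eq_iff)

lemma comod_hom_id: "comod_hom n u u (\<lambda>i j. if i = j then 1 else 0)"
  by (simp add: comod_hom_def)

lemma comod_hom_diff:
  fixes P :: "nat \<Rightarrow> nat \<Rightarrow> 'k::comm_ring_1"
  assumes P: "comod_hom n u w P" and P': "comod_hom n u w P'"
  shows "comod_hom n u w (\<lambda>i j. P i j - c * P' i j)"
  unfolding comod_hom_def
proof (intro allI impI)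
  fix i j t assume "i < n" "j < n"
  have "(\<Sum>l<n. (P i l - c * P' i l) * u l j t)
      = (\<Sum>l<n. P i l * u l j t) - c * (\<Sum>l<n. P' i l * u l j t)"
    by (simp add: left_diff_distrib sum_subtractf sum_distrib_left mult.assoc)
  also have "\<dots> = (\<Sum>l<n. w i l t * P l j) - c * (\<Sum>l<n. w i l t * P' l j)"
    using P P' \<open>i < n\<close> \<open>j < n\<close> by (simp add: comod_hom_def)
  also have "\<dots> = (\<Sum>l<n. w i l t * (P l j - c * P' l j))"
    by (simp add: right_diff_distrib sum_subtractf sum_distrib_left mult_ac)
  finally show "(\<Sum>l<n. (P i l - c * P' i l) * u l j t) = (\<Sum>l<n. w i l t * (P l j - c * P' l j))" .
qed

lemma comod_hom_comp:
  fixes P :: "nat \<Rightarrow> nat \<Rightarrow> 'k::comm_semiring_1"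
  assumes P: "comod_hom n u v P" and Q: "comod_hom n v w Q"
  shows "comod_hom n u w (mat_mult n Q P)"
  unfolding comod_hom_def mat_mult_def
proof (intro allI impI)
  fix i j t assume i: "i < n" and j: "j < n"
  have "(\<Sum>l<n. (\<Sum>m<n. Q i m * P m l) * u l j t) = (\<Sum>m<n. Q i m * (\<Sum>l<n. P m l * u l j t))"
    by (simp add: sum_distrib_left sum_distrib_right mult_ac) (rule sum.swap)
  also have "\<dots> = (\<Sum>m<n. Q i m * (\<Sum>l<n. v m l t * P l j))"
    using P j by (intro sum.cong refl) (simp add: comod_hom_def)
  also have "\<dots> = (\<Sum>l<n. (\<Sum>m<n. Q i m * v m l t) * P l j)"
    by (simp add: sum_distrib_left sum_distrib_right mult_ac) (rule sum.swap)
  also have "\<dots> = (\<Sum>l<n. (\<Sum>k<n. w i k t * Q k l) * P l j)"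
    using Q i by (intro sum.cong refl) (simp add: comod_hom_def)
  also have "\<dots> = (\<Sum>k<n. w i k t * (\<Sum>l<n. Q k l * P l j))"
    by (simp add: sum_distrib_left sum_distrib_right mult_ac) (rule sum.swap)
  finally show "(\<Sum>l<n. (\<Sum>m<n. Q i m * P m l) * u l j t) = (\<Sum>k<n. w i k t * (\<Sum>l<n. Q k l * P l j))" .
qed

lemma comod_hom_inverse:
  fixes P :: "nat \<Rightarrow> nat \<Rightarrow> 'k::field"
  assumes P: "comod_hom n u w P" and Q: "mat_inverse_of n P Q"
  shows "comod_hom n w u Q"
  unfolding comod_hom_def
proof (intro allI impI)
  fix i j t assume i: "i < n" and j: "j < n"
  have PQ: "\<And>m. m < n \<Longrightarrow> (\<Sum>k<n. P m k * Q k j) = (if m = j then 1 else 0)"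
    and QP: "\<And>m. m < n \<Longrightarrow> (\<Sum>l<n. Q i l * P l m) = (if i = m then 1 else 0)"
    using Q i j by (auto simp: mat_inverse_of_def)
  have "(\<Sum>l<n. Q i l * w l j t) = (\<Sum>l<n. Q i l * (\<Sum>m<n. w l m t * (\<Sum>k<n. P m k * Q k j)))"
    using j by (simp add: PQ)
  also have "\<dots> = (\<Sum>l<n. Q i l * (\<Sum>k<n. (\<Sum>m<n. w l m t * P m k) * Q k j))"
    by (simp only: sum_mult_sum_assoc)
  also have "\<dots> = (\<Sum>k<n. (\<Sum>l<n. Q i l * (\<Sum>m<n. w l m t * P m k)) * Q k j)"
    by (rule sum_mult_sum_assoc)
  also have "\<dots> = (\<Sum>k<n. (\<Sum>l<n. Q i l * (\<Sum>m<n. P l m * u m k t)) * Q k j)"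
    using P by (intro sum.cong refl) (simp add: comod_hom_def)
  also have "\<dots> = (\<Sum>k<n. (\<Sum>m<n. (\<Sum>l<n. Q i l * P l m) * u m k t) * Q k j)"
    by (simp only: sum_mult_sum_assoc)
  also have "\<dots> = (\<Sum>k<n. u i k t * Q k j)"
    using i by (simp add: QP)
  finally show "(\<Sum>l<n. Q i l * w l j t) = (\<Sum>l<n. u i l t * Q l j)" .
qed

lemma subcomod_kernel:
  assumes P: "comod_hom n u w P"
  shows "subcomod n u {v \<in> vspace n. \<forall>i<n. (\<Sum>j<n. P i j * v j) = 0}"
  unfolding subcomod_def
proof (intro conjI ballI allI)
  fix v t assume "v \<in> {v \<in> vspace n. \<forall>i<n. (\<Sum>j<n. P i j * v j) = 0}"
  then have Pv: "\<And>l. l < n \<Longrightarrow> (\<Sum>j<n. P l j * v j) = 0" by simp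
  have "(\<Sum>k<n. P i k * (if k < n then \<Sum>j<n. v j * u k j t else 0)) = 0" if i: "i < n" for i
  proof -
    have "(\<Sum>k<n. P i k * (if k < n then \<Sum>j<n. v j * u k j t else 0))
        = (\<Sum>j<n. (\<Sum>k<n. P i k * u k j t) * v j)"
      by (simp add: sum_distrib_left sum_distrib_right mult_ac) (rule sum.swap)
    also have "\<dots> = (\<Sum>j<n. (\<Sum>l<n. w i l t * P l j) * v j)"
      using P i by (intro sum.cong refl) (simp add: comod_hom_def)
    also have "\<dots> = (\<Sum>l<n. w i l t * (\<Sum>j<n. P l j * v j))"
      by (simp add: sum_mult_sum_assoc)
    also have "\<dots> = 0" by (simp add: Pv)
    finally show ?thesis .
  qed
  then show "(\<lambda>i. if i < n then \<Sum>j<n. v j * u i j t else 0)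
    \<in> {v \<in> vspace n. \<forall>i<n. (\<Sum>j<n. P i j * v j) = 0}"
    by (simp add: vspace_def)
qed (auto simp: vspace_def algebra_simps sum.distrib sum_distrib_left[symmetric])

lemma invertible_or_kernel:
  fixes M :: "nat \<Rightarrow> nat \<Rightarrow> 'k::field"
  shows "invertible n M \<or> (\<exists>v. (\<exists>j<n. v j \<noteq> 0) \<and> (\<forall>i<n. (\<Sum>j<n. M i j * v j) = 0))"
proof -
  define A where "A = mat n n (\<lambda>(i, j). M i j)"
  have A: "A \<in> carrier_mat n n" unfolding A_def by auto
  show ?thesis
  proof (cases "det A = 0")
    case True
    then obtain w where w: "w \<in> carrier_vec n" "w \<noteq> 0\<^sub>v n" "A *\<^sub>v w = 0\<^sub>v n"
      using det_0_iff_vec_prod_zero[OF A] by auto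
    have "\<exists>j<n. w $ j \<noteq> 0"
      using w(1,2) by (metis eq_vecI index_zero_vec(1,2) carrier_vecD)
    moreover have "(\<Sum>j<n. M i j * w $ j) = 0" if "i < n" for i
      using that w(1) arg_cong[OF w(3), of "\<lambda>x. x $ i"]
      by (simp add: A_def mult_mat_vec_def scalar_prod_def atLeast0LessThan)
    ultimately show ?thesis by blast
  next
    case False
    then have "A \<in> Units (ring_mat TYPE('k) n n)" using det_non_zero_imp_unit[OF A] by auto
    then obtain B where B: "B \<in> carrier_mat n n" "B * A = 1\<^sub>m n" "A * B = 1\<^sub>m n"
      unfolding Units_def ring_mat_def by auto
    have "mat_inverse_of n M (\<lambda>i j. B $$ (i, j))"
      unfolding mat_inverse_of_def
    proof (intro allI impI conjI)
      fix i j assume ij: "i < n" "j < n"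
      have "(A * B) $$ (i, j) = 1\<^sub>m n $$ (i, j)" "(B * A) $$ (i, j) = 1\<^sub>m n $$ (i, j)"
        using B by simp_all
      then show "(\<Sum>l<n. M i l * B $$ (l, j)) = (if i = j then 1 else 0)"
        and "(\<Sum>l<n. B $$ (i, l) * M l j) = (if i = j then 1 else 0)"
        using ij B(1) by (simp_all add: A_def scalar_prod_def atLeast0LessThan)
    qed
    then show ?thesis unfolding invertible_def by blast
  qed
qed

lemma exists_eigenvector:
  fixes N :: "nat \<Rightarrow> nat \<Rightarrow> 'k::alg_closed_field"
  assumes n: "0 < n"
  shows "\<exists>c v. (\<exists>j<n. v j \<noteq> 0) \<and> (\<forall>i<n. (\<Sum>j<n. N i j * v j) = c * v i)"
proof -
  define A where "A = mat n n (\<lambda>(i, j). N i j)"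
  have A: "A \<in> carrier_mat n n" unfolding A_def by auto
  have "degree (char_poly A) > 0" using degree_monic_char_poly[OF A] n by auto
  then obtain c where "poly (char_poly A) c = 0" using alg_closed_imp_poly_has_root by blast
  then have "eigenvalue A c" using eigenvalue_root_char_poly[OF A] by auto
  then obtain w where "eigenvector A w c" unfolding eigenvalue_def by auto
  then have w: "w \<in> carrier_vec n" "w \<noteq> 0\<^sub>v n" "A *\<^sub>v w = c \<cdot>\<^sub>v w"
    unfolding eigenvector_def using A by auto
  have "\<exists>j<n. w $ j \<noteq> 0"
    using w(1,2) by (metis eq_vecI index_zero_vec(1,2) carrier_vecD)
  moreover have "(\<Sum>j<n. N i j * w $ j) = c * w $ i" if "i < n" for i
    using that w(1) arg_cong[OF w(3), of "\<lambda>x. x $ i"]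
    by (simp add: A_def mult_mat_vec_def scalar_prod_def atLeast0LessThan)
  ultimately show ?thesis by blast
qed

lemma comod_hom_eq_0_if_kernel:
  assumes simple: "simple_comod H n u" and P: "comod_hom n u w P"
    and v: "\<exists>j<n. v j \<noteq> 0" and Pv: "\<And>i. i < n \<Longrightarrow> (\<Sum>j<n. P i j * v j) = 0"
    and i: "i < n" and j: "j < n"
  shows "P i j = 0"
proof -
  let ?W = "{v \<in> vspace n. \<forall>i<n. (\<Sum>j<n. P i j * v j) = 0}"
  have "(\<lambda>j. if j < n then v j else 0) \<in> ?W"
    using Pv by (simp add: vspace_def)
  moreover have "(\<lambda>j. if j < n then v j else 0) \<noteq> (\<lambda>_. 0)"
    using v by (auto simp: fun_eq_iff)
  ultimately have "?W = vspace n"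
    using simple subcomod_kernel[OF P] unfolding simple_comod_def by blast
  moreover have "bvec j \<in> vspace n"
    using j by (simp add: vspace_def bvec_def)
  ultimately have "(\<Sum>l<n. P i l * bvec j l) = 0"
    using i by blast
  then show ?thesis
    using j by (simp add: bvec_def)
qed

lemma comod_hom_zero_or_invertible:
  assumes "simple_comod H n u" "comod_hom n u w P"
  shows "(\<forall>i<n. \<forall>j<n. P i j = 0) \<or> invertible n P"
  using invertible_or_kernel[of n P] comod_hom_eq_0_if_kernel[OF assms] by blast

lemma comod_endo_scalar:
  fixes D :: "nat \<Rightarrow> nat \<Rightarrow> 'k::alg_closed_field"
  assumes simple: "simple_comod H n u" and D: "comod_hom n u u D"
  shows "\<exists>c. \<forall>i<n. \<forall>j<n. D i j = c * (if i = j then 1 else 0)"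
proof -
  have "0 < n" using simple by (simp add: simple_comod_def)
  then obtain c v where v: "\<exists>j<n. v j \<noteq> 0" and eig: "\<forall>i<n. (\<Sum>j<n. D i j * v j) = c * v i"
    using exists_eigenvector by blast
  have hom: "comod_hom n u u (\<lambda>i j. D i j - c * (if i = j then 1 else 0))"
    using comod_hom_diff[OF D comod_hom_id] .
  have "(\<Sum>j<n. (D i j - c * (if i = j then 1 else 0)) * v j) = 0" if "i < n" for i
  proof -
    have "(\<Sum>j<n. (D i j - c * (if i = j then 1 else 0)) * v j)
        = (\<Sum>j<n. D i j * v j) - c * (\<Sum>j<n. (if i = j then 1 else 0) * v j)"
      by (simp add: left_diff_distrib sum_subtractf sum_distrib_left mult.assoc)
    then show ?thesis
      using that eig by simp
  qed
  then have "D i j - c * (if i = j then 1 else 0) = 0" if "i < n" "j < n" for i j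
    using comod_hom_eq_0_if_kernel[OF simple hom v _ that] by blast
  then show ?thesis by auto
qed

lemma comod_hom_unique:
  fixes P :: "nat \<Rightarrow> nat \<Rightarrow> 'k::alg_closed_field"
  assumes simple: "simple_comod H n u" and P: "comod_hom n u w P" and Q: "mat_inverse_of n P Q"
    and P': "comod_hom n u w P'"
  shows "\<exists>c. \<forall>i<n. \<forall>j<n. P' i j = c * P i j"
proof -
  have "comod_hom n u u (mat_mult n Q P')"
    using comod_hom_comp[OF P' comod_hom_inverse[OF P Q]] .
  then obtain c where c: "\<forall>k<n. \<forall>j<n. (\<Sum>m<n. Q k m * P' m j) = c * (if k = j then 1 else 0)"
    using comod_endo_scalar[OF simple] unfolding mat_mult_def by blast
  have "P' i j = c * P i j" if i: "i < n" and j: "j < n" for i j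
  proof -
    have "\<And>m. m < n \<Longrightarrow> (\<Sum>k<n. P i k * Q k m) = (if i = m then 1 else 0)"
      using Q i by (simp add: mat_inverse_of_def)
    then have "P' i j = (\<Sum>m<n. (\<Sum>k<n. P i k * Q k m) * P' m j)"
      using i by simp
    also have "\<dots> = (\<Sum>k<n. P i k * (\<Sum>m<n. Q k m * P' m j))"
      by (rule sum_mult_sum_assoc[symmetric])
    also have "\<dots> = (\<Sum>k<n. c * (P i k * (if k = j then 1 else 0)))"
      using j c by (intro sum.cong refl) simp
    also have "\<dots> = c * P i j"
      using j by (simp add: sum_distrib_left[symmetric])
    finally show ?thesis .
  qed
  then show ?thesis by blast
qed

section \<open>Colinear forms\<close>

lemma mat_inverse_of_transpose:
  "mat_inverse_of n P Q \<Longrightarrow> mat_inverse_of n (mat_transpose P) (mat_transpose Q)"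
  unfolding mat_inverse_of_def mat_transpose_def by (auto simp: mult.commute)

lemma mat_transpose_transpose [simp]: "mat_transpose (mat_transpose P) = P"
  by (simp add: mat_transpose_def)

lemma invertible_transpose [simp]: "invertible n (mat_transpose P) \<longleftrightarrow> invertible n P"
  using mat_inverse_of_transpose[of n "mat_transpose P"] mat_inverse_of_transpose[of n P]
  unfolding invertible_def mat_transpose_def by auto

locale comodule = hopf_algebra H for H :: "('i, 'k::field) hopf" +
  fixes n :: nat and u :: "nat \<Rightarrow> nat \<Rightarrow> 'i \<Rightarrow> 'k"
  assumes comod: "comod H n u"
begin

lemma fin_coeff [simp]: "i < n \<Longrightarrow> j < n \<Longrightarrow> fin (u i j)"
  using comod by (simp add: comod_def)

lemma Comul_coeff: "i < n \<Longrightarrow> j < n \<Longrightarrow> Comul H (u i j) = (\<lambda>p. \<Sum>l<n. tens (u i l) (u l j) p)"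
  using comod by (simp add: comod_def)

lemma Counit_coeff: "i < n \<Longrightarrow> j < n \<Longrightarrow> Counit H (u i j) = (if i = j then 1 else 0)"
  using comod by (simp add: comod_def)

lemma antipode_coeff_left:
  assumes "i < n" "j < n"
  shows "(\<Sum>l<n. Mul H (Anti H (u i l)) (u l j) t) = (if i = j then 1 else 0) * hunit H t"
proof -
  have "lin (\<lambda>(a, b). Mul H (hanti H a) (bvec b)) (Comul H (u i j))
      = (\<lambda>t. \<Sum>l<n. Mul H (Anti H (u i l)) (u l j) t)"
    using assms by (simp add: Comul_coeff, subst lin_sum) (auto simp: lin_antipode_left_tens)
  then show ?thesis
    using antipode_left[of "u i j"] assms by (simp add: Counit_coeff fun_eq_iff)
qed

lemma antipode_coeff_right:
  assumes "i < n" "j < n"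
  shows "(\<Sum>l<n. Mul H (u i l) (Anti H (u l j)) t) = (if i = j then 1 else 0) * hunit H t"
proof -
  have "lin (\<lambda>(a, b). Mul H (bvec a) (hanti H b)) (Comul H (u i j))
      = (\<lambda>t. \<Sum>l<n. Mul H (u i l) (Anti H (u l j)) t)"
    using assms by (simp add: Comul_coeff, subst lin_sum) (auto simp: lin_antipode_right_tens)
  then show ?thesis
    using antipode_right[of "u i j"] assms by (simp add: Counit_coeff fun_eq_iff)
qed

lemma colinear_formD:
  "colinear_form H n u E \<Longrightarrow> i < n \<Longrightarrow> j < n \<Longrightarrow>
   (\<Sum>p<n. \<Sum>q<n. E p q * Mul H (u p i) (u q j) t) = E i j * hunit H t"
  unfolding colinear_form_def by (metis (mono_tags))

lemma comod_hom_dual_if_colinear_form: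
  assumes E: "colinear_form H n u E"
  shows "comod_hom n u (dual_comod H n u) (mat_transpose E)"
  unfolding comod_hom_def dual_comod_def mat_transpose_def
proof (intro allI impI)
  fix i j t assume i: "i < n" and j: "j < n"
  have "(\<Sum>l<n. Anti H (u l i) t * E j l) = (\<Sum>l<n. E j l * Anti H (u l i) t)"
    by (simp add: mult.commute)
  also have "\<dots> = (\<Sum>l<n. Mul H (\<lambda>s. E j l * hunit H s) (Anti H (u l i)) t)"
    using i by simp
  also have "\<dots> = (\<Sum>l<n. Mul H (\<lambda>s. \<Sum>p<n. \<Sum>q<n. E p q * Mul H (u p j) (u q l) s) (Anti H (u l i)) t)"
    using colinear_formD[OF E j] by (intro sum.cong refl) (simp add: fun_eq_iff)
  also have "\<dots> = (\<Sum>l<n. \<Sum>p<n. \<Sum>q<n. E p q * Mul H (Mul H (u p j) (u q l)) (Anti H (u l i)) t)"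
    using i j by (intro sum.cong refl) (simp add: Mul_linear)
  also have "\<dots> = (\<Sum>l<n. \<Sum>p<n. \<Sum>q<n. E p q * Mul H (u p j) (Mul H (u q l) (Anti H (u l i))) t)"
    using i j by (intro sum.cong refl) (simp add: Mul_assoc)
  also have "\<dots> = (\<Sum>p<n. \<Sum>q<n. E p q * Mul H (u p j) (\<lambda>s. \<Sum>l<n. Mul H (u q l) (Anti H (u l i)) s) t)"
    using i j by (simp add: Mul_linear sum_distrib_left) (rule sum_swap3)
  also have "\<dots> = (\<Sum>p<n. \<Sum>q<n. E p q * Mul H (u p j) (\<lambda>s. (if q = i then 1 else 0) * hunit H s) t)"
    using i by (simp add: antipode_coeff_right)
  also have "\<dots> = (\<Sum>p<n. \<Sum>q<n. E p q * ((if q = i then 1 else 0) * u p j t))"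
    using j by simp
  also have "\<dots> = (\<Sum>p<n. \<Sum>q<n. E p q * u p j t * (if q = i then 1 else 0))"
    by (simp add: ac_simps)
  also have "\<dots> = (\<Sum>p<n. E p i * u p j t)"
    using i by simp
  finally show "(\<Sum>l<n. E l i * u l j t) = (\<Sum>l<n. Anti H (u l i) t * E j l)" ..
qed

lemma colinear_form_if_comod_hom_dual:
  assumes P: "comod_hom n u (dual_comod H n u) (mat_transpose E)"
  shows "colinear_form H n u E"
  unfolding colinear_form_def
proof (intro allI impI ext)
  fix i j t assume i: "i < n" and j: "j < n"
  have "(\<Sum>p<n. \<Sum>q<n. E p q * Mul H (u p i) (u q j) t)
      = (\<Sum>q<n. Mul H (\<lambda>s. \<Sum>p<n. E p q * u p i s) (u q j) t)"
    using i j by (simp add: Mul_linear) (rule sum.swap)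
  also have "\<dots> = (\<Sum>q<n. Mul H (\<lambda>s. \<Sum>l<n. E i l * Anti H (u l q) s) (u q j) t)"
    using P i by (intro sum.cong refl)
      (simp add: comod_hom_def dual_comod_def mat_transpose_def mult.commute)
  also have "\<dots> = (\<Sum>l<n. E i l * (\<Sum>q<n. Mul H (Anti H (u l q)) (u q j) t))"
    using i j by (simp add: Mul_linear sum_distrib_left) (rule sum.swap)
  also have "\<dots> = E i j * hunit H t"
    using j by (simp add: antipode_coeff_left mult.assoc[symmetric] sum_distrib_right[symmetric])
  finally show "(\<Sum>p<n. \<Sum>q<n. E p q * Mul H (u p i) (u q j) t) = E i j * hunit H t" .
qed

lemma colinear_form_iff_comod_hom_dual:
  "colinear_form H n u E \<longleftrightarrow> comod_hom n u (dual_comod H n u) (mat_transpose E)"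
  using comod_hom_dual_if_colinear_form colinear_form_if_comod_hom_dual by blast

lemma self_dual_iff_colinear_form:
  "self_dual H n u \<longleftrightarrow> (\<exists>E. colinear_form H n u E \<and> invertible n E)"
proof
  assume "self_dual H n u"
  then obtain P where "invertible n P" "comod_hom n u (dual_comod H n u) P"
    by (auto simp: self_dual_def iso_comod_iff_invertible_comod_hom)
  then show "\<exists>E. colinear_form H n u E \<and> invertible n E"
    using colinear_form_iff_comod_hom_dual[of "mat_transpose P"] by auto
next
  assume "\<exists>E. colinear_form H n u E \<and> invertible n E"
  then obtain E where "comod_hom n u (dual_comod H n u) (mat_transpose E)" "invertible n E"
    by (auto simp: colinear_form_iff_comod_hom_dual)
  then show "self_dual H n u"
    unfolding self_dual_def iso_comod_iff_invertible_comod_hom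
    by (intro exI[of _ "mat_transpose E"]) simp
qed

lemma colinear_form_transpose:
  assumes involutive: "\<forall>x. fin x \<longrightarrow> Anti H (Anti H x) = x" and E: "colinear_form H n u E"
  shows "colinear_form H n u (mat_transpose E)"
  unfolding colinear_form_iff_comod_hom_dual comod_hom_def dual_comod_def mat_transpose_transpose
proof (intro allI impI)
  fix i j t assume i: "i < n" and j: "j < n"
  have "(\<lambda>t. \<Sum>l<n. E l j * u l i t) = (\<lambda>t. \<Sum>l<n. E i l * Anti H (u l j) t)"
    using E i j
    by (auto simp: colinear_form_iff_comod_hom_dual comod_hom_def dual_comod_def mat_transpose_def
        fun_eq_iff mult.commute)
  then have "Anti H (\<lambda>t. \<Sum>l<n. E l j * u l i t) t = Anti H (\<lambda>t. \<Sum>l<n. E i l * Anti H (u l j) t) t"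
    by simp
  then show "(\<Sum>l<n. E i l * u l j t) = (\<Sum>l<n. Anti H (u l i) t * E l j)"
    using involutive i j by (simp add: Anti_sum Anti_scale mult.commute)
qed

section \<open>The Schur indicator\<close>

lemma Comul_Mul_coeff:
  assumes "a < n" "i < n" "b < n" "j < n"
  shows "Comul H (Mul H (u a i) (u b j)) =
    (\<lambda>p. \<Sum>r<n. \<Sum>s<n. tens (Mul H (u a r) (u b s)) (Mul H (u r i) (u s j)) p)"
proof -
  have "Comul H (Mul H (u a i) (u b j))
      = Mul2 H (\<lambda>p. \<Sum>r<n. tens (u a r) (u r i) p) (\<lambda>p. \<Sum>s<n. tens (u b s) (u s j) p)"
    using assms by (simp add: Comul_Mul Comul_coeff)
  also have "\<dots> = (\<lambda>p. \<Sum>r<n. \<Sum>s<n. Mul2 H (tens (u a r) (u r i)) (tens (u b s) (u s j)) p)"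
    using assms by (simp add: Mul2_sum_left Mul2_sum_right)
  also have "\<dots> = (\<lambda>p. \<Sum>r<n. \<Sum>s<n. tens (Mul H (u a r) (u b s)) (Mul H (u r i) (u s j)) p)"
    using assms by (simp add: Mul2_tens)
  finally show ?thesis .
qed

context
  fixes h :: "'i \<Rightarrow> 'k"
  assumes haar: "haar H h"
begin

lemma haar_coeff_left:
  assumes "a < n" "i < n" "b < n" "j < n"
  shows "(\<Sum>r<n. \<Sum>s<n. linf h (Mul H (u a r) (u b s)) * Mul H (u r i) (u s j) t)
     = linf h (Mul H (u a i) (u b j)) * hunit H t"
proof -
  have "lin (\<lambda>(a, b). (\<lambda>t. h a * bvec b t)) (Comul H (Mul H (u a i) (u b j)))
      = (\<lambda>t. \<Sum>r<n. \<Sum>s<n. linf h (Mul H (u a r) (u b s)) * Mul H (u r i) (u s j) t)"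
    using assms by (simp add: Comul_Mul_coeff lin_sum_lessThan lin_tens_bvec_left)
  then show ?thesis
    using haar assms unfolding haar_def by (simp add: fun_eq_iff)
qed

lemma haar_coeff_right:
  assumes "a < n" "i < n" "b < n" "j < n"
  shows "(\<Sum>r<n. \<Sum>s<n. Mul H (u a r) (u b s) t * linf h (Mul H (u r i) (u s j)))
     = linf h (Mul H (u a i) (u b j)) * hunit H t"
proof -
  have "lin (\<lambda>(a, b). (\<lambda>t. bvec a t * h b)) (Comul H (Mul H (u a i) (u b j)))
      = (\<lambda>t. \<Sum>r<n. \<Sum>s<n. Mul H (u a r) (u b s) t * linf h (Mul H (u r i) (u s j)))"
    using assms by (simp add: Comul_Mul_coeff lin_sum_lessThan lin_tens_bvec_right)
  then show ?thesis
    using haar assms unfolding haar_def by (simp add: fun_eq_iff)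
qed

lemma colinear_form_haar_coeff:
  "a < n \<Longrightarrow> b < n \<Longrightarrow> colinear_form H n u (\<lambda>i j. linf h (Mul H (u a i) (u b j)))"
  unfolding colinear_form_def using haar_coeff_left by auto

lemma nu2_eq_0_if_not_self_dual:
  assumes simple: "simple_comod H n u" and not_self_dual: "\<not> self_dual H n u"
  shows "nu2 H h n u = 0"
proof -
  have "linf h (Mul H (u a i) (u b j)) = 0" if "a < n" "b < n" "i < n" "j < n" for a b i j
  proof -
    let ?P = "mat_transpose (\<lambda>i j. linf h (Mul H (u a i) (u b j)))"
    have hom: "comod_hom n u (dual_comod H n u) ?P"
      using colinear_form_haar_coeff that(1,2) colinear_form_iff_comod_hom_dual by blast
    moreover have "\<not> invertible n ?P"
      using not_self_dual hom by (auto simp: self_dual_def iso_comod_iff_invertible_comod_hom)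
    ultimately show ?thesis
      using comod_hom_zero_or_invertible[OF simple] that by (fastforce simp: mat_transpose_def)
  qed
  then show ?thesis by (simp add: nu2_def)
qed

end

end

lemma mat_inverse_of_nonzero_entry:
  assumes "mat_inverse_of n E G" "0 < n"
  shows "\<exists>i<n. \<exists>j<n. E i j \<noteq> 0"
proof (rule ccontr)
  assume "\<not> ?thesis"
  then have "(\<Sum>l<n. E 0 l * G l 0) = 0" using assms(2) by simp
  then show False using assms by (simp add: mat_inverse_of_def)
qed

lemma pairing_with_inverse_if_symmetric:
  assumes G: "mat_inverse_of n E G" and s: "\<forall>i<n. \<forall>j<n. E j i = s * E i j"
  shows "(\<Sum>i<n. \<Sum>l<n. E i l * G i l) = s * of_nat n"
proof -
  have "(\<Sum>i<n. \<Sum>l<n. E i l * G i l) = (\<Sum>i<n. \<Sum>l<n. s * (G i l * E l i))"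
  proof (intro sum.cong refl)
    fix i l assume "i \<in> {..<n}" "l \<in> {..<n}"
    then have "E i l = s * E l i" using s by blast
    then show "E i l * G i l = s * (G i l * E l i)" by (simp add: mult_ac)
  qed
  also have "\<dots> = s * of_nat n"
    using G by (simp add: mat_inverse_of_def sum_distrib_left[symmetric])
  finally show ?thesis .
qed

locale simple_comodule_alg_closed = comodule H n u
  for H :: "('i, 'k::alg_closed_field) hopf" and n u +
  assumes simple: "simple_comod H n u"
begin

lemma dim_pos: "0 < n"
  using simple by (simp add: simple_comod_def)

lemma colinear_form_unique:
  assumes E: "colinear_form H n u E" and G: "mat_inverse_of n E G" and E': "colinear_form H n u E'"
  shows "\<exists>c. \<forall>i<n. \<forall>j<n. E' i j = c * E i j"
proof -
  have "comod_hom n u (dual_comod H n u) (mat_transpose E)"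
    and "comod_hom n u (dual_comod H n u) (mat_transpose E')"
    using E E' by (simp_all add: colinear_form_iff_comod_hom_dual)
  then obtain c where "\<forall>i<n. \<forall>j<n. mat_transpose E' i j = c * mat_transpose E i j"
    using comod_hom_unique[OF simple _ mat_inverse_of_transpose[OF G]] by blast
  then show ?thesis by (auto simp: mat_transpose_def)
qed

context
  fixes h :: "'i \<Rightarrow> 'k" and E G C :: "nat \<Rightarrow> nat \<Rightarrow> 'k"
  assumes haar: "haar H h" and E: "colinear_form H n u E" and G: "mat_inverse_of n E G"
    and haar_scalars: "\<And>a b i j. a < n \<Longrightarrow> b < n \<Longrightarrow> i < n \<Longrightarrow> j < n \<Longrightarrow>
      linf h (Mul H (u a i) (u b j)) = C a b * E i j"
begin

lemma pairing_haar_scalars_eq_1: "(\<Sum>p<n. \<Sum>q<n. E p q * C p q) = 1"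
proof -
  obtain i j where ij: "i < n" "j < n" "E i j \<noteq> 0"
    using mat_inverse_of_nonzero_entry[OF G dim_pos] by blast
  have "E i j = linf h (\<lambda>t. E i j * hunit H t)"
    using haar by (simp add: haar_def linf_scale)
  also have "\<dots> = linf h (\<lambda>t. \<Sum>p<n. \<Sum>q<n. E p q * Mul H (u p i) (u q j) t)"
    using colinear_formD[OF E ij(1,2)] by simp
  also have "\<dots> = (\<Sum>p<n. \<Sum>q<n. E p q * linf h (Mul H (u p i) (u q j)))"
    using ij by (simp add: linf_sum_lessThan linf_scale)
  also have "\<dots> = (\<Sum>p<n. \<Sum>q<n. E p q * C p q) * E i j"
    using ij by (simp add: haar_scalars sum_distrib_left sum_distrib_right mult_ac)
  finally show ?thesis using ij(3) by simp
qed

lemma haar_scalars_coinvariant: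
  assumes a: "a < n" and b: "b < n"
  shows "(\<Sum>r<n. \<Sum>s<n. C r s * Mul H (u a r) (u b s) t) = C a b * hunit H t"
proof -
  obtain i j where ij: "i < n" "j < n" "E i j \<noteq> 0"
    using mat_inverse_of_nonzero_entry[OF G dim_pos] by blast
  have "(\<Sum>r<n. \<Sum>s<n. C r s * Mul H (u a r) (u b s) t) * E i j
      = (\<Sum>r<n. \<Sum>s<n. Mul H (u a r) (u b s) t * linf h (Mul H (u r i) (u s j)))"
    using ij by (simp add: haar_scalars sum_distrib_left sum_distrib_right mult_ac)
  also have "\<dots> = C a b * hunit H t * E i j"
    using haar_coeff_right[OF haar a ij(1) b ij(2)] a b ij by (simp add: haar_scalars)
  finally show ?thesis using ij(3) by simp
qed

lemma comod_hom_haar_scalars_form: "comod_hom n u u (mat_mult n C E)"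
  unfolding comod_hom_def mat_mult_def
proof (intro allI impI)
  fix a z t assume a: "a < n" and z: "z < n"
  have unfold_E: "E s z * u a r t = (\<Sum>b<n. \<Sum>x<n. E b x * Mul H (u a r) (Mul H (u b s) (u x z)) t)"
    if "r < n" "s < n" for r s
  proof -
    have "E s z * u a r t = Mul H (u a r) (\<lambda>t. E s z * hunit H t) t"
      using a that by simp
    also have "\<dots> = Mul H (u a r) (\<lambda>t. \<Sum>b<n. \<Sum>x<n. E b x * Mul H (u b s) (u x z) t) t"
      using colinear_formD[OF E that(2) z] by simp
    also have "\<dots> = (\<Sum>b<n. \<Sum>x<n. E b x * Mul H (u a r) (Mul H (u b s) (u x z)) t)"
      using a z that by (simp add: Mul_linear)
    finally show ?thesis .
  qed
  have coinv: "(\<Sum>r<n. \<Sum>s<n. C r s * Mul H (u a r) (Mul H (u b s) (u x z)) t) = C a b * u x z t"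
    if "b < n" "x < n" for b x
  proof -
    have "(\<Sum>r<n. \<Sum>s<n. C r s * Mul H (u a r) (Mul H (u b s) (u x z)) t)
        = Mul H (\<lambda>t. \<Sum>r<n. \<Sum>s<n. C r s * Mul H (u a r) (u b s) t) (u x z) t"
      using a z that by (simp add: Mul_linear Mul_assoc)
    also have "\<dots> = C a b * u x z t"
      using haar_scalars_coinvariant[OF a that(1)] z that by simp
    finally show ?thesis .
  qed
  have "(\<Sum>r<n. u a r t * (\<Sum>s<n. C r s * E s z))
      = (\<Sum>r<n. \<Sum>s<n. C r s * (\<Sum>b<n. \<Sum>x<n. E b x * Mul H (u a r) (Mul H (u b s) (u x z)) t))"
    by (simp add: unfold_E sum_distrib_left mult_ac)
  also have "\<dots> = (\<Sum>b<n. \<Sum>x<n.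
      E b x * (\<Sum>r<n. \<Sum>s<n. C r s * Mul H (u a r) (Mul H (u b s) (u x z)) t))"
    by (simp add: sum_distrib_left mult_ac) (rule sum_swap4)
  also have "\<dots> = (\<Sum>x<n. (\<Sum>b<n. C a b * E b x) * u x z t)"
    by (simp add: coinv sum_distrib_left sum_distrib_right mult_ac) (rule sum.swap)
  finally show "(\<Sum>l<n. (\<Sum>m<n. C a m * E m l) * u l z t) = (\<Sum>r<n. u a r t * (\<Sum>s<n. C r s * E s z))"
    by simp
qed

lemma haar_scalars_eq_multiple_of_inverse: "\<exists>c. \<forall>a<n. \<forall>b<n. C a b = c * G a b"
proof -
  obtain c where c: "\<forall>a<n. \<forall>z<n. (\<Sum>m<n. C a m * E m z) = c * (if a = z then 1 else 0)"
    using comod_endo_scalar[OF simple comod_hom_haar_scalars_form] by (auto simp: mat_mult_def)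
  have "C a b = c * G a b" if a: "a < n" and b: "b < n" for a b
  proof -
    have "\<And>m. m < n \<Longrightarrow> (\<Sum>z<n. E m z * G z b) = (if m = b then 1 else 0)"
      using G b by (simp add: mat_inverse_of_def)
    then have "C a b = (\<Sum>m<n. C a m * (\<Sum>z<n. E m z * G z b))"
      using b by simp
    also have "\<dots> = (\<Sum>z<n. (\<Sum>m<n. C a m * E m z) * G z b)"
      by (rule sum_mult_sum_assoc)
    also have "\<dots> = c * G a b"
      using a c by (simp add: mult.assoc sum_distrib_left[symmetric])
    finally show ?thesis .
  qed
  then show ?thesis by blast
qed

end

lemma nu2_eq_dim_div_pairing:
  assumes haar: "haar H h" and E: "colinear_form H n u E" and G: "mat_inverse_of n E G"
  shows "nu2 H h n u = of_nat n / (\<Sum>i<n. \<Sum>l<n. E i l * G i l)"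
proof -
  have "\<forall>a<n. \<forall>b<n. \<exists>c. \<forall>i<n. \<forall>j<n. linf h (Mul H (u a i) (u b j)) = c * E i j"
    using colinear_form_unique[OF E G colinear_form_haar_coeff[OF haar]] by blast
  then obtain C where C: "\<And>a b i j. a < n \<Longrightarrow> b < n \<Longrightarrow> i < n \<Longrightarrow> j < n \<Longrightarrow>
      linf h (Mul H (u a i) (u b j)) = C a b * E i j"
    by metis
  obtain c where c: "\<forall>a<n. \<forall>b<n. C a b = c * G a b"
    using haar_scalars_eq_multiple_of_inverse[OF haar E G C] by blast
  have "nu2 H h n u = (\<Sum>i<n. \<Sum>j<n. C j i * E i j)"
    using C by (simp add: nu2_def)
  also have "\<dots> = c * (\<Sum>j<n. \<Sum>i<n. G j i * E i j)"
    using c by (simp add: sum_distrib_left mult_ac) (rule sum.swap)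
  also have "\<dots> = c * of_nat n"
    using G by (simp add: mat_inverse_of_def)
  finally have nu2: "nu2 H h n u = c * of_nat n" .
  have pairing: "c * (\<Sum>i<n. \<Sum>l<n. E i l * G i l) = 1"
    using pairing_haar_scalars_eq_1[OF haar E G C] c by (simp add: sum_distrib_left mult_ac)
  then have "c = 1 / (\<Sum>i<n. \<Sum>l<n. E i l * G i l)"
    by (auto simp: eq_divide_eq)
  then show ?thesis
    using nu2 by simp
qed

lemma nu2_eq_dim_div_trace:
  assumes "haar H h" and "colinear_form H n u E" and "mat_inverse_of n (mat_transpose E) F"
  shows "nu2 H h n u = of_nat n / mat_trace n (mat_mult n E F)"
  using nu2_eq_dim_div_pairing[OF assms(1,2) mat_inverse_of_transpose[OF assms(3), simplified]]
  by (simp add: mat_trace_def mat_mult_def mat_transpose_def)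

lemma colinear_form_symmetric_or_skew:
  assumes involutive: "\<forall>x. fin x \<longrightarrow> Anti H (Anti H x) = x"
    and E: "colinear_form H n u E" and G: "mat_inverse_of n E G"
  shows "\<exists>s. (s = 1 \<or> s = -1) \<and> (\<forall>i<n. \<forall>j<n. E j i = s * E i j)"
proof -
  obtain s where s: "\<forall>i<n. \<forall>j<n. E j i = s * E i j"
    using colinear_form_unique[OF E G colinear_form_transpose[OF involutive E]]
    by (auto simp: mat_transpose_def)
  obtain i j where ij: "i < n" "j < n" "E i j \<noteq> 0"
    using mat_inverse_of_nonzero_entry[OF G dim_pos] by blast
  have "E i j = s * (s * E i j)"
    using s ij by metis
  then have "s * s = 1"
    using ij(3) by (metis mult.assoc mult_cancel_right2)
  then have "s = 1 \<or> s = -1"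
    by (metis square_eq_1_iff power2_eq_square)
  then show ?thesis using s by blast
qed

end

lemma nu2_eq_sign_of_form:
  fixes H :: "('i, 'k::{alg_closed_field, field_char_0}) hopf"
  assumes "simple_comodule_alg_closed H n u" and haar: "haar H h"
    and E: "colinear_form H n u E" "invertible n E"
    and sign: "s = 1 \<or> s = -1" and sym: "\<forall>i<n. \<forall>j<n. E j i = s * E i j"
  shows "nu2 H h n u = s"
proof -
  interpret simple_comodule_alg_closed H n u by fact
  obtain G where G: "mat_inverse_of n E G"
    using E(2) by (auto simp: invertible_def)
  have "nu2 H h n u = of_nat n / (s * of_nat n)"
    using nu2_eq_dim_div_pairing[OF haar E(1) G] pairing_with_inverse_if_symmetric[OF G sym] by simp
  then show ?thesis
    using sign dim_pos by auto
qed

lemma nu2_sign_of_self_dual_involutive: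
  fixes H :: "('i, 'k::{alg_closed_field, field_char_0}) hopf"
  assumes V: "simple_comodule_alg_closed H n u" and haar: "haar H h"
    and self_dual: "self_dual H n u" and involutive: "\<forall>x. fin x \<longrightarrow> Anti H (Anti H x) = x"
  shows "nu2 H h n u = 1 \<or> nu2 H h n u = -1"
    and "s = 1 \<or> s = -1 \<Longrightarrow> nu2 H h n u = s \<longleftrightarrow>
      (\<exists>E. colinear_form H n u E \<and> invertible n E \<and> (\<forall>i<n. \<forall>j<n. E j i = s * E i j))"
proof -
  interpret simple_comodule_alg_closed H n u by (fact V)
  obtain E G where E: "colinear_form H n u E" "invertible n E" and G: "mat_inverse_of n E G"
    using self_dual by (auto simp: self_dual_iff_colinear_form invertible_def)
  then obtain s' where s': "s' = 1 \<or> s' = -1" "\<forall>i<n. \<forall>j<n. E j i = s' * E i j"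
    using colinear_form_symmetric_or_skew[OF involutive] by blast
  have nu2: "nu2 H h n u = s'"
    using nu2_eq_sign_of_form[OF V haar E s'] .
  then show "nu2 H h n u = 1 \<or> nu2 H h n u = -1"
    using s'(1) by simp
  show "nu2 H h n u = s \<longleftrightarrow>
      (\<exists>E. colinear_form H n u E \<and> invertible n E \<and> (\<forall>i<n. \<forall>j<n. E j i = s * E i j))"
    if sign: "s = 1 \<or> s = -1"
  proof
    assume "nu2 H h n u = s"
    then show "\<exists>E. colinear_form H n u E \<and> invertible n E \<and> (\<forall>i<n. \<forall>j<n. E j i = s * E i j)"
      using E s'(2) nu2 by blast
  next
    assume "\<exists>E. colinear_form H n u E \<and> invertible n E \<and> (\<forall>i<n. \<forall>j<n. E j i = s * E i j)"
    then show "nu2 H h n u = s"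
      using nu2_eq_sign_of_form[OF V haar _ _ sign] by blast
  qed
qed

theorem theorem6:
  fixes H :: "('i, 'k::{alg_closed_field, field_char_0}) hopf"
    and h :: "'i \<Rightarrow> 'k"
    and n :: nat
    and u :: "nat \<Rightarrow> nat \<Rightarrow> 'i \<Rightarrow> 'k"
  assumes hopf: "hopf_alg H"
    and cosemi: "cosemisimple H"
    and haar: "haar H h"
    and simple: "simple_comod H n u"
  shows "(\<not> self_dual H n u \<longrightarrow> nu2 H h n u = 0)
    \<and> (self_dual H n u \<longrightarrow>
         (\<forall>E F. colinear_form H n u E \<and> invertible n E \<and>
                mat_inverse_of n (mat_transpose E) F \<longrightarrow>
                nu2 H h n u = of_nat n / mat_trace n (mat_mult n E F)))
    \<and> (self_dual H n u \<and> (\<forall>x. fin x \<longrightarrow> Anti H (Anti H x) = x) \<longrightarrow>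
         (nu2 H h n u = 1 \<or> nu2 H h n u = -1)
         \<and> (nu2 H h n u = 1 \<longleftrightarrow>
              (\<exists>E. colinear_form H n u E \<and> invertible n E \<and>
                   (\<forall>i<n. \<forall>j<n. E j i = E i j)))
         \<and> (nu2 H h n u = -1 \<longleftrightarrow>
              (\<exists>E. colinear_form H n u E \<and> invertible n E \<and>
                   (\<forall>i<n. \<forall>j<n. E j i = - E i j))))"
proof -
  have V: "simple_comodule_alg_closed H n u"
    using hopf simple by unfold_locales (simp_all add: simple_comod_def)
  interpret simple_comodule_alg_closed H n u
    by (fact V)
  have "nu2 H h n u = 1 \<or> nu2 H h n u = -1"
    and "nu2 H h n u = 1 \<longleftrightarrow>
      (\<exists>E. colinear_form H n u E \<and> invertible n E \<and> (\<forall>i<n. \<forall>j<n. E j i = E i j))"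
    and "nu2 H h n u = -1 \<longleftrightarrow>
      (\<exists>E. colinear_form H n u E \<and> invertible n E \<and> (\<forall>i<n. \<forall>j<n. E j i = - E i j))"
    if "self_dual H n u" "\<forall>x. fin x \<longrightarrow> Anti H (Anti H x) = x"
    using nu2_sign_of_self_dual_involutive[OF V haar that] by simp_all
  then show ?thesis
    using nu2_eq_0_if_not_self_dual[OF haar simple] nu2_eq_dim_div_trace[OF haar] by blast
qed

end
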